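(* Let $n,m,k$ be positive integers and let $\varphi$ be an automorphism of $\Gamma=\mathbb{Z}_{nm}\mathbin{\mathrm{wr}}\mathbb{Z}^k$. Let $\varphi_n$ and $\varphi_m$ be the automorphisms of $\mathbb{Z}_n\mathbin{\mathrm{wr}}\mathbb{Z}^k$ and $\mathbb{Z}_m\mathbin{\mathrm{wr}}\mathbb{Z}^k$ determined by $\Pi_n\circ\varphi=\varphi_n\circ\Pi_n$ and $\Pi_m\circ\varphi=\varphi_m\circ\Pi_m$. If $R(\varphi_n')=R(\varphi_m')=1$, then $R(\varphi')=1$.
   Context: $\mathbb{Z}_q\mathbin{\mathrm{wr}}\mathbb{Z}^k=\bigoplus_{x\in\mathbb{Z}^k}(\mathbb{Z}_q)_x\rtimes_\alpha\mathbb{Z}^k$ is the restricted wreath product, $\alpha(z)$ mapping $(\mathbb{Z}_q)_x$ onto $(\mathbb{Z}_q)_{z+x}$; its torsion subgroup $\Sigma_q=\bigoplus_x(\mathbb{Z}_q)_x$ is characteristic, and for an automorphism $\psi$, $\psi'$ denotes the restriction of $\psi$ to the torsion subgroup. For $d\mid nm$, $\Pi_d\colon\mathbb{Z}_{nm}\mathbin{\mathrm{wr}}\mathbb{Z}^k\to\mathbb{Z}_d\mathbin{\mathrm{wr}}\mathbb{Z}^k$ is $\Pi_d(\sigma,z)=(\pi_d(\sigma),z)$, where $\pi_d$ reduces every coefficient mod $d$; its kernel is characteristic, so $\varphi_d$ is well defined. $R(\psi)$ denotes the Reidemeister number: the number of classes of the relation $g_1\sim hg_2\psi(h^{-1})$;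 for the abelian group $\Sigma$, $R(\varphi')=1$ means $1-\varphi'$ is surjective. *)

theory Defs
  imports "HOL-Algebra.Group" "HOL-Algebra.Coset"
begin

text \<open>Elements of Z_q wr Z^k: pairs (sigma, z) with sigma : Z^k -> Z_q finitely supported
  (Z_q represented by {0..<q}) and z in Z^k (represented by 'k => int, 'k a finite type with k elements).\<close>

type_synonym 'k wr_elem = "(('k \<Rightarrow> int) \<Rightarrow> int) \<times> ('k \<Rightarrow> int)"

definition wr :: "nat \<Rightarrow> ('k::finite) wr_elem monoid" where
  "wr q = \<lparr> carrier = {(\<sigma>, z). finite {x. \<sigma> x \<noteq> 0} \<and> (\<forall>x. \<sigma> x \<in> {0..<int q})},
           mult = (\<lambda>(\<sigma>, z) (\<tau>, w). (\<lambda>x. (\<sigma> x + \<tau> (\<lambda>i. x i - z i)) mod int q, \<lambda>i. z i + w i)),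
           one = (\<lambda>x. 0, \<lambda>i. 0) \<rparr>"

text \<open>The torsion subgroup Sigma_q = direct sum of the lamp groups.\<close>
definition torsion :: "nat \<Rightarrow> ('k::finite) wr_elem set" where
  "torsion q = {g \<in> carrier (wr q :: 'k wr_elem monoid). snd g = (\<lambda>i. 0)}"

definition Proj :: "nat \<Rightarrow> ('k::finite) wr_elem \<Rightarrow> 'k wr_elem" where
  "Proj d g = (\<lambda>x. fst g x mod int d, snd g)"

text \<open>Twisted conjugacy and the Reidemeister number (number of classes; card = 0 if infinitely many).\<close>
definition twisted_conj :: "('a, 'b) monoid_scheme \<Rightarrow> ('a \<Rightarrow> 'a) \<Rightarrow> ('a \<times> 'a) set" where
  "twisted_conj G \<psi> = {(g1, g2). g1 \<in> carrier G \<and> g2 \<in> carrier G \<and>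
      (\<exists>h\<in>carrier G. g1 = h \<otimes>\<^bsub>G\<^esub> g2 \<otimes>\<^bsub>G\<^esub> \<psi> (inv\<^bsub>G\<^esub> h))}"

definition reidemeister :: "('a, 'b) monoid_scheme \<Rightarrow> ('a \<Rightarrow> 'a) \<Rightarrow> nat" where
  "reidemeister G \<psi> = card (carrier G // twisted_conj G \<psi>)"

end

theory Submission
  imports Defs
begin

text \<open>For an endomorphism \<psi> of an abelian group, R(\<psi>) = 1 exactly when h \<mapsto> h - \<psi> h is
  onto. Multiplication by m and \<Pi>_m form an exact sequence
  0 \<rightarrow> \<Sigma>_n \<rightarrow> \<Sigma>_nm \<rightarrow> \<Sigma>_m \<rightarrow> 0 intertwining \<phi>_n', \<phi>', \<phi>_m' (for the first map because
  m\<sigma> only depends on \<sigma> mod n). Ontoness of h \<mapsto> h - \<psi> h passes from the ends of such a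
  sequence to its middle: solve the equation modulo the kernel, then correct the error inside
  the kernel.\<close>

definition lang_map :: "('a, 'b) monoid_scheme \<Rightarrow> ('a \<Rightarrow> 'a) \<Rightarrow> 'a \<Rightarrow> 'a" where
  "lang_map G \<psi> h = h \<otimes>\<^bsub>G\<^esub> inv\<^bsub>G\<^esub> (\<psi> h)"

context comm_group
begin

lemma lang_map_closed: "\<psi> \<in> hom G G \<Longrightarrow> h \<in> carrier G \<Longrightarrow> lang_map G \<psi> h \<in> carrier G"
  by (simp add: lang_map_def hom_in_carrier)

lemma lang_map_mult:
  assumes "\<psi> \<in> hom G G" and "x \<in> carrier G" and "y \<in> carrier G"
  shows "lang_map G \<psi> (x \<otimes> y) = lang_map G \<psi> x \<otimes> lang_map G \<psi> y"
  using assms by (simp add: lang_map_def hom_mult hom_in_carrier inv_mult m_ac)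

lemma lang_map_one: "\<psi> \<in> hom G G \<Longrightarrow> lang_map G \<psi> \<one> = \<one>"
  by (simp add: lang_map_def hom_one is_group)

lemma lang_map_inv:
  assumes \<psi>: "\<psi> \<in> hom G G" and x: "x \<in> carrier G"
  shows "lang_map G \<psi> (inv x) = inv (lang_map G \<psi> x)"
proof -
  interpret group_hom G G \<psi> by (simp add: group_hom_def group_hom_axioms_def is_group \<psi>)
  show ?thesis using x by (simp add: lang_map_def inv_mult)
qed

lemma twisted_conj_iff:
  assumes \<psi>: "\<psi> \<in> hom G G"
  shows "(x, y) \<in> twisted_conj G (restrict \<psi> (carrier G)) \<longleftrightarrow>
    x \<in> carrier G \<and> y \<in> carrier G \<and> x \<otimes> inv y \<in> lang_map G \<psi> ` carrier G"
proof -
  interpret group_hom G G \<psi> by (simp add: group_hom_def group_hom_axioms_def is_group \<psi>)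
  have "x = h \<otimes> y \<otimes> restrict \<psi> (carrier G) (inv h) \<longleftrightarrow> x \<otimes> inv y = lang_map G \<psi> h"
    if "x \<in> carrier G" "y \<in> carrier G" "h \<in> carrier G" for h
  proof -
    have "h \<otimes> y \<otimes> restrict \<psi> (carrier G) (inv h) = lang_map G \<psi> h \<otimes> y"
      using that by (simp add: lang_map_def m_ac)
    then show ?thesis
      using that inv_solve_right'[of "lang_map G \<psi> h" x y] by (simp add: lang_map_closed \<psi>)
  qed
  then show ?thesis
    by (auto simp: twisted_conj_def)
qed

lemma reidemeister_eq_1_iff:
  assumes \<psi>: "\<psi> \<in> hom G G"
  shows "reidemeister G (restrict \<psi> (carrier G)) = 1 \<longleftrightarrow> lang_map G \<psi> ` carrier G = carrier G"
proof
  let ?R = "twisted_conj G (restrict \<psi> (carrier G))"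
  assume "reidemeister G (restrict \<psi> (carrier G)) = 1"
  then obtain C where C: "carrier G // ?R = {C}"
    unfolding reidemeister_def by (meson card_1_singletonE)
  have "u \<in> lang_map G \<psi> ` carrier G" if u: "u \<in> carrier G" for u
  proof -
    have "?R``{u} = ?R``{\<one>}"
      using C quotientI[OF u, of ?R] quotientI[OF one_closed, of ?R] by simp
    moreover have "(u, u) \<in> ?R"
      using u image_eqI[where f="lang_map G \<psi>", OF lang_map_one[OF \<psi>, symmetric] one_closed]
      by (simp add: twisted_conj_iff[OF \<psi>])
    ultimately have "(\<one>, u) \<in> ?R" by blast
    then obtain h where h: "h \<in> carrier G" "inv u = lang_map G \<psi> h"
      by (auto simp: twisted_conj_iff[OF \<psi>])
    then have "u = lang_map G \<psi> (inv h)"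
      using u by (simp add: lang_map_inv[OF \<psi>] flip: h(2))
    then show ?thesis using h by blast
  qed
  then show "lang_map G \<psi> ` carrier G = carrier G"
    using lang_map_closed[OF \<psi>] by blast
next
  let ?R = "twisted_conj G (restrict \<psi> (carrier G))"
  assume surj: "lang_map G \<psi> ` carrier G = carrier G"
  have "?R``{x} = carrier G" if "x \<in> carrier G" for x
    using that surj by (auto simp: twisted_conj_iff[OF \<psi>])
  then have "carrier G // ?R = {carrier G}"
    unfolding quotient_def by blast
  then show "reidemeister G (restrict \<psi> (carrier G)) = 1"
    by (simp add: reidemeister_def)
qed

lemma lang_map_surj_of_exact:
  assumes \<psi>: "\<psi> \<in> hom G G"
    and K: "group K" and \<iota>: "\<iota> \<in> hom K G" and \<psi>K: "\<psi>K \<in> hom K K"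
    and \<iota>_\<psi>: "\<And>k. k \<in> carrier K \<Longrightarrow> \<psi> (\<iota> k) = \<iota> (\<psi>K k)"
    and H: "group H" and p: "p \<in> hom G H" and p_surj: "p ` carrier G = carrier H"
    and p_\<psi>: "\<And>g. g \<in> carrier G \<Longrightarrow> p (\<psi> g) = \<psi>H (p g)"
    and exact: "kernel G H p \<subseteq> \<iota> ` carrier K"
    and K_surj: "lang_map K \<psi>K ` carrier K = carrier K"
    and H_surj: "lang_map H \<psi>H ` carrier H = carrier H"
  shows "lang_map G \<psi> ` carrier G = carrier G"
proof
  interpret p: group_hom G H p by (simp add: group_hom_def group_hom_axioms_def is_group H p)
  interpret \<iota>: group_hom K G \<iota> by (simp add: group_hom_def group_hom_axioms_def is_group K \<iota>)
  show "lang_map G \<psi> ` carrier G \<subseteq> carrier G"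
    using lang_map_closed[OF \<psi>] by blast
  show "carrier G \<subseteq> lang_map G \<psi> ` carrier G"
  proof
    fix g assume g: "g \<in> carrier G"
    have "p g \<in> lang_map H \<psi>H ` p ` carrier G"
      using g by (simp add: p_surj H_surj)
    then obtain h where h: "h \<in> carrier G" and ph: "p g = lang_map H \<psi>H (p h)"
      by blast
    have D_h: "lang_map G \<psi> h \<in> carrier G"
      by (rule lang_map_closed[OF \<psi> h])
    have "p (lang_map G \<psi> h) = p g"
      using h \<psi> by (simp add: lang_map_def p_\<psi> hom_in_carrier ph)
    then have "p (g \<otimes> inv (lang_map G \<psi> h)) = \<one>\<^bsub>H\<^esub>"
      using g D_h by (simp add: p.hom_mult p.hom_inv)
    then have "g \<otimes> inv (lang_map G \<psi> h) \<in> kernel G H p"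
      unfolding kernel_def using g D_h by blast
    then have "g \<otimes> inv (lang_map G \<psi> h) \<in> \<iota> ` lang_map K \<psi>K ` carrier K"
      using exact by (auto simp: K_surj)
    then obtain k where k: "k \<in> carrier K" and g': "g \<otimes> inv (lang_map G \<psi> h) = \<iota> (lang_map K \<psi>K k)"
      by blast
    have \<iota>_lang_map: "\<iota> (lang_map K \<psi>K k) = lang_map G \<psi> (\<iota> k)"
      using k \<psi>K by (simp add: lang_map_def \<iota>_\<psi> hom_in_carrier)
    have "g = (g \<otimes> inv (lang_map G \<psi> h)) \<otimes> lang_map G \<psi> h"
      using g D_h by (simp add: m_assoc)
    also have "\<dots> = lang_map G \<psi> (\<iota> k) \<otimes> lang_map G \<psi> h"
      by (simp only: g' \<iota>_lang_map)
    also have "\<dots> = lang_map G \<psi> (h \<otimes> \<iota> k)"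
      using lang_map_mult[OF \<psi> h \<iota>.hom_closed[OF k]] m_comm[OF lang_map_closed[OF \<psi> \<iota>.hom_closed[OF k]] D_h]
      by (simp only:)
    finally show "g \<in> lang_map G \<psi> ` carrier G"
      using m_closed[OF h \<iota>.hom_closed[OF k]] by (rule image_eqI)
  qed
qed

end

lemma wr_mult:
  "(s, z) \<otimes>\<^bsub>wr q\<^esub> (t, w) = (\<lambda>x. (s x + t (\<lambda>i. x i - z i)) mod int q, \<lambda>i. z i + w i)"
  by (simp add: wr_def)

lemma wr_one: "\<one>\<^bsub>wr q\<^esub> = (\<lambda>x. 0, \<lambda>i. 0)"
  by (simp add: wr_def)

lemma wr_carrier:
  "(s, z) \<in> carrier (wr q) \<longleftrightarrow> finite {x. s x \<noteq> 0} \<and> (\<forall>x. 0 \<le> s x \<and> s x < int q)"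
  by (simp add: wr_def)

lemma finite_nonzero_shift:
  fixes t :: "('k \<Rightarrow> int) \<Rightarrow> int"
  assumes "finite {x. t x \<noteq> 0}"
  shows "finite {x. t (\<lambda>i. x i - z i) \<noteq> 0}"
proof -
  have "{x. t (\<lambda>i. x i - z i) \<noteq> 0} = (\<lambda>y i. y i + z i) ` {x. t x \<noteq> 0}"
    by (auto intro!: image_eqI[where x = "\<lambda>i. _ i - z i"])
  then show ?thesis
    using assms by simp
qed

lemma wr_group:
  assumes "q > 0"
  shows "group (wr q :: ('k::finite) wr_elem monoid)"
proof (rule groupI)
  fix g h :: "'k wr_elem"
  assume "g \<in> carrier (wr q)" and "h \<in> carrier (wr q)"
  moreover obtain s z t w where "g = (s, z)" and "h = (t, w)"
    by force
  moreover have "{x. (s x + t (\<lambda>i. x i - z i)) mod int q \<noteq> 0}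
      \<subseteq> {x. s x \<noteq> 0} \<union> {x. t (\<lambda>i. x i - z i) \<noteq> 0}"
    by auto
  ultimately show "g \<otimes>\<^bsub>wr q\<^esub> h \<in> carrier (wr q)"
    using assms finite_nonzero_shift[of t z] by (auto simp: wr_mult wr_carrier finite_subset)
next
  show "\<one>\<^bsub>wr q\<^esub> \<in> carrier (wr q :: 'k wr_elem monoid)"
    using assms by (simp add: wr_one wr_carrier)
next
  fix g h u :: "'k wr_elem"
  obtain s z t w r v where "g = (s, z)" and "h = (t, w)" and "u = (r, v)"
    by (metis prod.exhaust)
  then show "g \<otimes>\<^bsub>wr q\<^esub> h \<otimes>\<^bsub>wr q\<^esub> u = g \<otimes>\<^bsub>wr q\<^esub> (h \<otimes>\<^bsub>wr q\<^esub> u)"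
    by (simp add: wr_mult mod_add_left_eq mod_add_right_eq add.assoc diff_diff_eq)
next
  fix g :: "'k wr_elem"
  assume "g \<in> carrier (wr q)"
  then show "\<one>\<^bsub>wr q\<^esub> \<otimes>\<^bsub>wr q\<^esub> g = g"
    by (cases g) (simp add: wr_one wr_mult wr_carrier)
next
  fix g :: "'k wr_elem"
  assume g: "g \<in> carrier (wr q)"
  obtain s z where gsz: "g = (s, z)"
    by force
  let ?h = "(\<lambda>x. (- s (\<lambda>i. x i + z i)) mod int q, \<lambda>i. - z i)"
  have "{x. (- s (\<lambda>i. x i + z i)) mod int q \<noteq> 0} \<subseteq> {x. s (\<lambda>i. x i - - z i) \<noteq> 0}"
    by auto
  then have "?h \<in> carrier (wr q)"
    using g assms finite_nonzero_shift[of s "\<lambda>i. - z i"] by (auto simp: gsz wr_carrier finite_subset)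
  moreover have "?h \<otimes>\<^bsub>wr q\<^esub> g = \<one>\<^bsub>wr q\<^esub>"
    by (simp add: gsz wr_mult wr_one mod_add_left_eq)
  ultimately show "\<exists>h\<in>carrier (wr q). h \<otimes>\<^bsub>wr q\<^esub> g = \<one>\<^bsub>wr q\<^esub>"
    by blast
qed

abbreviation torsion_group :: "nat \<Rightarrow> ('k::finite) wr_elem monoid" where
  "torsion_group q \<equiv> (wr q)\<lparr>carrier := torsion q\<rparr>"

lemma torsion_iff:
  "(s, z) \<in> torsion q \<longleftrightarrow> z = (\<lambda>i. 0) \<and> finite {x. s x \<noteq> 0} \<and> (\<forall>x. 0 \<le> s x \<and> s x < int q)"
  by (auto simp: torsion_def wr_carrier)

lemma torsionE:
  assumes "g \<in> torsion q"
  obtains s where "g = (s, \<lambda>i. 0)" and "finite {x. s x \<noteq> 0}" and "\<forall>x. 0 \<le> s x \<and> s x < int q"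
  using assms by (cases g) (auto simp: torsion_iff)

lemma torsion_mult: "(s, \<lambda>i. 0) \<otimes>\<^bsub>wr q\<^esub> (t, \<lambda>i. 0) = (\<lambda>x. (s x + t x) mod int q, \<lambda>i. 0)"
  by (simp add: wr_mult)

lemma snd_wr_mult: "snd (g \<otimes>\<^bsub>wr q\<^esub> h) = (\<lambda>i. snd g i + snd h i)"
  by (cases g, cases h) (simp add: wr_mult)

lemma subgroup_torsion:
  assumes "q > 0"
  shows "subgroup (torsion q) (wr q :: ('k::finite) wr_elem monoid)"
proof -
  interpret group "wr q :: 'k wr_elem monoid"
    using assms by (rule wr_group)
  show ?thesis
  proof (rule subgroupI)
    show "torsion q \<subseteq> carrier (wr q :: 'k wr_elem monoid)"
      by (auto simp: torsion_def)
    show "torsion q \<noteq> ({} :: 'k wr_elem set)"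
      using assms torsion_iff[of "\<lambda>x. 0" "\<lambda>i. 0" q] by auto
  next
    fix g :: "'k wr_elem"
    assume g: "g \<in> torsion q"
    then have g_carrier: "g \<in> carrier (wr q)" and "snd g = (\<lambda>i. 0)"
      by (simp_all add: torsion_def)
    moreover have "(\<lambda>i. snd (inv\<^bsub>wr q\<^esub> g) i + snd g i) = (\<lambda>i. 0)"
      using arg_cong[OF l_inv[OF g_carrier], of snd] by (simp only: snd_wr_mult wr_one snd_conv)
    ultimately show "inv\<^bsub>wr q\<^esub> g \<in> torsion q"
      by (simp add: torsion_def)
  next
    fix g h :: "'k wr_elem"
    assume "g \<in> torsion q" and "h \<in> torsion q"
    then show "g \<otimes>\<^bsub>wr q\<^esub> h \<in> torsion q"
      by (simp add: torsion_def snd_wr_mult)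
  qed
qed

lemma comm_group_torsion_group:
  assumes "q > 0"
  shows "comm_group (torsion_group q :: ('k::finite) wr_elem monoid)"
proof -
  interpret group "wr q :: 'k wr_elem monoid"
    using assms by (rule wr_group)
  interpret T: group "torsion_group q :: 'k wr_elem monoid"
    using subgroup_imp_group[OF subgroup_torsion[OF assms]] .
  show ?thesis
  proof (rule T.group_comm_groupI)
    fix g h :: "'k wr_elem"
    assume "g \<in> carrier (torsion_group q)" and "h \<in> carrier (torsion_group q)"
    then show "g \<otimes>\<^bsub>torsion_group q\<^esub> h = h \<otimes>\<^bsub>torsion_group q\<^esub> g"
      by (auto elim!: torsionE simp: torsion_mult add.commute)
  qed
qed

lemma torsion_group_pow: "g [^]\<^bsub>torsion_group q\<^esub> (k::nat) = g [^]\<^bsub>wr q\<^esub> k"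
  by (simp add: nat_pow_def)

lemma torsion_pow: "(s, \<lambda>i. 0) [^]\<^bsub>wr q\<^esub> (k::nat) = (\<lambda>x. (int k * s x) mod int q, \<lambda>i. 0)"
  by (induction k) (simp_all add: wr_one torsion_mult mod_add_right_eq algebra_simps)

lemma snd_wr_pow: "snd (g [^]\<^bsub>wr q\<^esub> (k::nat)) = (\<lambda>i. int k * snd g i)"
  by (induction k) (simp_all add: wr_one snd_wr_mult algebra_simps)

lemma hom_torsion_group:
  fixes \<phi> :: "('k::finite) wr_elem \<Rightarrow> 'k wr_elem"
  assumes q: "q > 0" and \<phi>: "\<phi> \<in> hom (wr q) (wr q)"
  shows "\<phi> \<in> hom (torsion_group q) (torsion_group q)"
proof -
  interpret \<phi>: group_hom "wr q :: 'k wr_elem monoid" "wr q" \<phi>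
    using wr_group[OF q] \<phi> by (simp add: group_hom_def group_hom_axioms_def)
  have "\<phi> g \<in> torsion q" if g: "g \<in> torsion q" for g
  proof -
    have g_carrier: "g \<in> carrier (wr q)"
      using g by (simp add: torsion_def)
    have "g [^]\<^bsub>wr q\<^esub> q = \<one>\<^bsub>wr q\<^esub>"
      using g by (auto elim!: torsionE simp: torsion_pow wr_one)
    then have "\<phi> g [^]\<^bsub>wr q\<^esub> q = \<one>\<^bsub>wr q\<^esub>"
      using \<phi>.hom_nat_pow[OF g_carrier, of q] by simp
    then have "(\<lambda>i. int q * snd (\<phi> g) i) = (\<lambda>i. 0)"
      using snd_wr_pow[where g = "\<phi> g" and q = q and k = q] by (simp add: wr_one)
    then have "snd (\<phi> g) = (\<lambda>i. 0)"
      using q by (simp add: fun_eq_iff)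
    then show ?thesis
      using hom_in_carrier[OF \<phi> g_carrier] by (simp add: torsion_def)
  qed
  then show ?thesis
    using \<phi> by (auto simp: hom_def torsion_def)
qed

lemma Proj_torsion: "Proj d (s, \<lambda>i. 0) = (\<lambda>x. s x mod int d, \<lambda>i. 0)"
  by (simp add: Proj_def)

lemma Proj_torsion_closed:
  assumes "d > 0" and "g \<in> torsion q"
  shows "Proj d g \<in> torsion d"
proof -
  obtain s where "g = (s, \<lambda>i. 0)" and "finite {x. s x \<noteq> 0}"
    using assms(2) by (rule torsionE)
  moreover have "{x. s x mod int d \<noteq> 0} \<subseteq> {x. s x \<noteq> 0}"
    by auto
  ultimately show ?thesis
    using assms(1) by (auto simp: Proj_torsion torsion_iff finite_subset)
qed

lemma Proj_hom_torsion_group: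
  assumes "d > 0" and "d dvd q"
  shows "Proj d \<in> hom (torsion_group q) (torsion_group d :: ('k::finite) wr_elem monoid)"
proof (rule homI)
  fix g :: "'k wr_elem"
  assume "g \<in> carrier (torsion_group q)"
  then show "Proj d g \<in> carrier (torsion_group d)"
    using assms(1) by (simp add: Proj_torsion_closed)
next
  fix g h :: "'k wr_elem"
  assume "g \<in> carrier (torsion_group q)" and "h \<in> carrier (torsion_group q)"
  moreover have "(a + b) mod int q mod int d = (a mod int d + b mod int d) mod int d" for a b
    using assms by (simp add: mod_mod_cancel mod_add_eq)
  ultimately show "Proj d (g \<otimes>\<^bsub>torsion_group q\<^esub> h) = Proj d g \<otimes>\<^bsub>torsion_group d\<^esub> Proj d h"
    by (auto elim!: torsionE simp: torsion_mult Proj_torsion)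
qed

lemma torsion_subset:
  assumes "d dvd q" and "q > 0"
  shows "torsion d \<subseteq> torsion q"
proof -
  have "int d \<le> int q"
    using assms by (simp add: dvd_imp_le)
  show ?thesis
  proof
    fix g
    assume "g \<in> torsion d"
    then obtain s where s: "g = (s, \<lambda>i. 0)" "finite {x. s x \<noteq> 0}" "\<forall>x. 0 \<le> s x \<and> s x < int d"
      by (rule torsionE)
    then have "\<forall>x. 0 \<le> s x \<and> s x < int q"
      using \<open>int d \<le> int q\<close> less_le_trans by blast
    then show "g \<in> torsion q"
      using s by (simp add: torsion_iff)
  qed
qed

lemma Proj_torsion_id: "g \<in> torsion d \<Longrightarrow> Proj d g = g"
  by (auto elim!: torsionE simp: Proj_torsion)

lemma Proj_torsion_surj:
  assumes "d > 0" and "d dvd q" and "q > 0"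
  shows "Proj d ` torsion q = (torsion d :: ('k::finite) wr_elem set)"
proof
  show "Proj d ` torsion q \<subseteq> torsion d"
    using assms(1) by (auto intro: Proj_torsion_closed)
  show "torsion d \<subseteq> Proj d ` (torsion q :: 'k wr_elem set)"
  proof
    fix g :: "'k wr_elem"
    assume g: "g \<in> torsion d"
    have "g = Proj d g" and "g \<in> torsion q"
      using torsion_subset[OF assms(2,3)] Proj_torsion_id[OF g] g by auto
    then show "g \<in> Proj d ` torsion q"
      by (rule image_eqI)
  qed
qed

lemma mult_mod_mod_mult: "(c * (a mod b)) mod (b * c) = (c * a) mod (b * c)" for a b c :: int
  by (simp add: mult.commute[of b c] mod_mult_mult1)

lemma torsion_pow_Proj:
  assumes "g \<in> torsion (n * m)"
  shows "Proj n g [^]\<^bsub>torsion_group (n * m)\<^esub> m = g [^]\<^bsub>torsion_group (n * m)\<^esub> m"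
  using assms
  by (auto elim!: torsionE simp: Proj_torsion torsion_group_pow torsion_pow mult_mod_mod_mult)

lemma pow_hom_torsion_group:
  assumes n: "n > 0" and m: "m > 0"
  shows "(\<lambda>g. g [^]\<^bsub>torsion_group (n * m)\<^esub> m)
    \<in> hom (torsion_group n) (torsion_group (n * m) :: ('k::finite) wr_elem monoid)"
proof -
  have nm: "n * m > 0"
    using n m by simp
  interpret T: comm_group "torsion_group (n * m) :: 'k wr_elem monoid"
    using nm by (rule comm_group_torsion_group)
  have sub: "torsion n \<subseteq> (torsion (n * m) :: 'k wr_elem set)"
    using nm by (simp add: torsion_subset)
  show ?thesis
  proof (rule homI)
    fix g :: "'k wr_elem"
    assume "g \<in> carrier (torsion_group n)"
    then show "g [^]\<^bsub>torsion_group (n * m)\<^esub> m \<in> carrier (torsion_group (n * m))"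
      using sub T.nat_pow_closed[of g m] by auto
  next
    fix g h :: "'k wr_elem"
    assume "g \<in> carrier (torsion_group n)" and "h \<in> carrier (torsion_group n)"
    then have g: "g \<in> torsion (n * m)" "Proj n g = g" and h: "h \<in> torsion (n * m)" "Proj n h = h"
      using sub by (auto simp: Proj_torsion_id)
    have gh: "g \<otimes>\<^bsub>torsion_group (n * m)\<^esub> h \<in> torsion (n * m)"
      using T.m_closed g h by simp
    have "g \<otimes>\<^bsub>torsion_group n\<^esub> h = Proj n (g \<otimes>\<^bsub>torsion_group (n * m)\<^esub> h)"
      using hom_mult[OF Proj_hom_torsion_group[OF n, of "n * m"], of g h] g h by simp
    then show "(g \<otimes>\<^bsub>torsion_group n\<^esub> h) [^]\<^bsub>torsion_group (n * m)\<^esub> m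
        = g [^]\<^bsub>torsion_group (n * m)\<^esub> m \<otimes>\<^bsub>torsion_group (n * m)\<^esub> h [^]\<^bsub>torsion_group (n * m)\<^esub> m"
      using torsion_pow_Proj[OF gh] T.pow_mult_distrib[OF T.m_comm, of g h m] g h by simp
  qed
qed

lemma kernel_Proj_torsion_group:
  assumes n: "n > 0" and m: "m > 0"
  shows "kernel (torsion_group (n * m)) (torsion_group m) (Proj m)
    \<subseteq> (\<lambda>g. g [^]\<^bsub>torsion_group (n * m)\<^esub> m) ` (torsion n :: ('k::finite) wr_elem set)"
proof
  fix g :: "'k wr_elem"
  assume "g \<in> kernel (torsion_group (n * m)) (torsion_group m) (Proj m)"
  then have g: "g \<in> torsion (n * m)" and "Proj m g = (\<lambda>x. 0, \<lambda>i. 0)"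
    by (simp_all add: kernel_def wr_one)
  obtain s where s: "g = (s, \<lambda>i. 0)" "finite {x. s x \<noteq> 0}" "\<forall>x. 0 \<le> s x \<and> s x < int (n * m)"
    using g by (rule torsionE)
  have dvd: "int m dvd s x" for x
    using \<open>Proj m g = _\<close> by (simp add: s Proj_torsion fun_eq_iff dvd_eq_mod_eq_0)
  define t where "t x = s x div int m" for x
  have s_t: "s x = int m * t x" for x
    using dvd[of x] by (simp add: t_def)
  have "{x. t x \<noteq> 0} \<subseteq> {x. s x \<noteq> 0}"
    using m by (auto simp: s_t)
  moreover have "0 \<le> t x \<and> t x < int n" for x
    using s(3) m by (auto simp: s_t zero_le_mult_iff mult.commute[of "int n"])
  ultimately have "(t, \<lambda>i. 0) \<in> torsion n"
    using s(2) by (auto simp: torsion_iff finite_subset)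
  moreover have "(t, \<lambda>i. 0) [^]\<^bsub>torsion_group (n * m)\<^esub> m = g"
    using s(3) by (simp add: s torsion_group_pow torsion_pow flip: s_t)
  ultimately show "g \<in> (\<lambda>g. g [^]\<^bsub>torsion_group (n * m)\<^esub> m) ` torsion n"
    by (auto intro: rev_image_eqI)
qed

lemma pow_commute_torsion_group:
  fixes \<phi> \<phi>n :: "('k::finite) wr_elem \<Rightarrow> 'k wr_elem"
  assumes n: "n > 0" and m: "m > 0" and \<phi>: "\<phi> \<in> hom (wr (n * m)) (wr (n * m))"
    and compat: "\<forall>g \<in> carrier (wr (n * m)). Proj n (\<phi> g) = \<phi>n (Proj n g)"
    and k: "k \<in> torsion n"
  shows "\<phi> (k [^]\<^bsub>torsion_group (n * m)\<^esub> m) = \<phi>n k [^]\<^bsub>torsion_group (n * m)\<^esub> m"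
proof -
  have nm: "n * m > 0"
    using n m by simp
  interpret T: comm_group "torsion_group (n * m) :: 'k wr_elem monoid"
    using nm by (rule comm_group_torsion_group)
  interpret \<phi>: group_hom "torsion_group (n * m) :: 'k wr_elem monoid" "torsion_group (n * m)" \<phi>
    using hom_torsion_group[OF nm \<phi>] by (simp add: group_hom_def group_hom_axioms_def T.is_group)
  have k_nm: "k \<in> torsion (n * m)"
    using torsion_subset[OF dvd_triv_left nm] k by blast
  then have "\<phi> k \<in> torsion (n * m)"
    using \<phi>.hom_closed by simp
  have "\<phi> (k [^]\<^bsub>torsion_group (n * m)\<^esub> m) = \<phi> k [^]\<^bsub>torsion_group (n * m)\<^esub> m"
    using \<phi>.hom_nat_pow k_nm by simp
  also have "\<dots> = Proj n (\<phi> k) [^]\<^bsub>torsion_group (n * m)\<^esub> m"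
    using torsion_pow_Proj[OF \<open>\<phi> k \<in> torsion (n * m)\<close>] by simp
  also have "\<dots> = \<phi>n k [^]\<^bsub>torsion_group (n * m)\<^esub> m"
    using compat k_nm Proj_torsion_id[OF k] by (simp add: torsion_def)
  finally show ?thesis .
qed

theorem theorem4p3:
  fixes n m :: nat
    and \<phi> \<phi>n \<phi>m :: "('k::finite) wr_elem \<Rightarrow> 'k wr_elem"
  assumes "n > 0" and "m > 0"
    and "\<phi> \<in> iso (wr (n * m)) (wr (n * m))"
    and "\<phi>n \<in> iso (wr n) (wr n)"
    and "\<phi>m \<in> iso (wr m) (wr m)"
    and "\<forall>g \<in> carrier (wr (n * m)). Proj n (\<phi> g) = \<phi>n (Proj n g)"
    and "\<forall>g \<in> carrier (wr (n * m)). Proj m (\<phi> g) = \<phi>m (Proj m g)"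
    and "reidemeister ((wr n)\<lparr>carrier := torsion n\<rparr>) (restrict \<phi>n (torsion n)) = 1"
    and "reidemeister ((wr m)\<lparr>carrier := torsion m\<rparr>) (restrict \<phi>m (torsion m)) = 1"
  shows "reidemeister ((wr (n * m))\<lparr>carrier := torsion (n * m)\<rparr>) (restrict \<phi> (torsion (n * m))) = 1"
proof -
  note n = assms(1) and m = assms(2)
  have nm: "n * m > 0"
    using n m by simp
  have hom: "\<psi> \<in> hom (torsion_group q) (torsion_group q)"
    if "q > 0" and "\<psi> \<in> iso (wr q) (wr q)" for q and \<psi> :: "'k wr_elem \<Rightarrow> 'k wr_elem"
    using that by (simp add: hom_torsion_group iso_imp_homomorphism)
  interpret N: comm_group "torsion_group n :: 'k wr_elem monoid"
    using n by (rule comm_group_torsion_group)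
  interpret M: comm_group "torsion_group m :: 'k wr_elem monoid"
    using m by (rule comm_group_torsion_group)
  interpret G: comm_group "torsion_group (n * m) :: 'k wr_elem monoid"
    using nm by (rule comm_group_torsion_group)
  have "lang_map (torsion_group (n * m)) \<phi> ` carrier (torsion_group (n * m)) = carrier (torsion_group (n * m))"
  proof (rule G.lang_map_surj_of_exact[OF hom[OF nm assms(3)] N.is_group pow_hom_torsion_group[OF n m]
        hom[OF n assms(4)] _ M.is_group Proj_hom_torsion_group[OF m dvd_triv_right]])
    show "\<phi> (k [^]\<^bsub>torsion_group (n * m)\<^esub> m) = \<phi>n k [^]\<^bsub>torsion_group (n * m)\<^esub> m"
      if "k \<in> carrier (torsion_group n)" for k
      using pow_commute_torsion_group[OF n m iso_imp_homomorphism[OF assms(3)] assms(6)] that by simp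
    show "Proj m ` carrier (torsion_group (n * m)) = carrier (torsion_group m)"
      using Proj_torsion_surj[OF m dvd_triv_right nm] by simp
    show "Proj m (\<phi> g) = \<phi>m (Proj m g)" if "g \<in> carrier (torsion_group (n * m))" for g
      using assms(7) that by (simp add: torsion_def)
    show "kernel (torsion_group (n * m)) (torsion_group m) (Proj m)
        \<subseteq> (\<lambda>g. g [^]\<^bsub>torsion_group (n * m)\<^esub> m) ` carrier (torsion_group n)"
      using kernel_Proj_torsion_group[OF n m] by simp
    show "lang_map (torsion_group n) \<phi>n ` carrier (torsion_group n) = carrier (torsion_group n)"
      using N.reidemeister_eq_1_iff[OF hom[OF n assms(4)]] assms(8) by simp
    show "lang_map (torsion_group m) \<phi>m ` carrier (torsion_group m) = carrier (torsion_group m)"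
      using M.reidemeister_eq_1_iff[OF hom[OF m assms(5)]] assms(9) by simp
  qed
  then show ?thesis
    using G.reidemeister_eq_1_iff[OF hom[OF nm assms(3)]] by simp
qed

end
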